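(* Let $k$ be a field of characteristic zero and $r,n\geq1$. The centers of $\mathcal{D}(\mathcal{A}(C_r\wr\mathfrak{S}_n))$ and of $\mathcal{D}(\mathcal{B}_n)$ are $k$.
   Context: $\mathcal{A}(C_r\wr\mathfrak{S}_n)$ denotes the arrangement in $k^n$ (coordinates $x_1,\ldots,x_n$) with defining polynomial $x_1\cdots x_n\prod_{1\le i<j\le n}(x_j^r-x_i^r)$; its module of tangent derivations is free with basis $\alpha_1(x_k)=x_k$, $\alpha_m(x_k)=x_k\prod_{i=1}^{m-1}(x_k^r-x_i^r)$ ($2\le m\le n$). $\mathcal{B}_n$ is the braid arrangement in $k^n$ with hyperplanes $x_i=x_j$, $1\le i<j\le n$. For an arrangement $\mathcal{A}$ with defining polynomial $Q$ in $S=k[x_1,\ldots,x_n]$, $\mathcal{D}(\mathcal{A})=\bigcap_{m\ge1}\{P\in\mathcal{D}(S):P\,Q^m\mathcal{D}(S)\subseteq Q^m\mathcal{D}(S)\}$, where $\mathcal{D}(S)$ is the algebra of differential operators on $S$; for these (free) arrangements it is the subalgebra of $\operatorname{End}_k(S)$ generated by the tangent derivations and multiplications by elements of $S$. *)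

theory Defs
  imports "HOL-Library.Poly_Mapping"
begin

text \<open>Polynomials over k in the variables x_0, x_1, ... are finitely supported maps from monomials (exponent vectors) to coefficients. The coordinate ring S = k[x_1,...,x_n] is the subset of polynomials involving only variables with index < n (the paper x_i is index i-1).\<close>

type_synonym 'k mpoly = "(nat \<Rightarrow>\<^sub>0 nat) \<Rightarrow>\<^sub>0 'k"

definition Var :: "nat \<Rightarrow> 'k::comm_ring_1 mpoly" where
  "Var i = Poly_Mapping.single (Poly_Mapping.single i 1) 1"

definition Const :: "'k::comm_ring_1 \<Rightarrow> 'k mpoly" where
  "Const c = Poly_Mapping.single 0 c"

definition polys :: "nat \<Rightarrow> 'k::comm_ring_1 mpoly set" where
  "polys n = {p. \<forall>m\<in>Poly_Mapping.keys p. Poly_Mapping.keys m \<subseteq> {..<n}}"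

definition pdiff :: "nat \<Rightarrow> 'k::comm_ring_1 mpoly \<Rightarrow> 'k mpoly" where
  "pdiff i p = (\<Sum>m\<in>Poly_Mapping.keys p. Poly_Mapping.single (m - Poly_Mapping.single i 1)
                     (of_nat (Poly_Mapping.lookup m i) * Poly_Mapping.lookup p m))"

definition derivation :: "nat \<Rightarrow> (nat \<Rightarrow> 'k::comm_ring_1 mpoly) \<Rightarrow> 'k mpoly \<Rightarrow> 'k mpoly" where
  "derivation n a p = (\<Sum>k<n. a k * pdiff k p)"

definition tangent_derivations :: "nat \<Rightarrow> 'k::comm_ring_1 mpoly \<Rightarrow> ('k mpoly \<Rightarrow> 'k mpoly) set" where
  "tangent_derivations n Q =
     {derivation n a | a. (\<forall>k<n. a k \<in> polys n) \<and>
                          (\<exists>h\<in>polys n. derivation n a Q = Q * h)}"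

text \<open>Subalgebra of End_k(S) generated by multiplications by elements of S and
a set G of operators (k-scalars are multiplications by constants).\<close>
inductive_set gen_alg :: "nat \<Rightarrow> ('k::comm_ring_1 mpoly \<Rightarrow> 'k mpoly) set
                           \<Rightarrow> ('k mpoly \<Rightarrow> 'k mpoly) set"
  for n G where
  mult: "f \<in> polys n \<Longrightarrow> (\<lambda>p. f * p) \<in> gen_alg n G"
| gen: "\<theta> \<in> G \<Longrightarrow> \<theta> \<in> gen_alg n G"
| add: "P \<in> gen_alg n G \<Longrightarrow> R \<in> gen_alg n G \<Longrightarrow> (\<lambda>p. P p + R p) \<in> gen_alg n G"
| comp: "P \<in> gen_alg n G \<Longrightarrow> R \<in> gen_alg n G \<Longrightarrow> (P \<circ> R) \<in> gen_alg n G"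

definition Dalg :: "nat \<Rightarrow> 'k::comm_ring_1 mpoly \<Rightarrow> ('k mpoly \<Rightarrow> 'k mpoly) set" where
  "Dalg n Q = gen_alg n (tangent_derivations n Q)"

text \<open>Operators are compared as elements of End_k(S), i.e. on S.\<close>
definition center_is_scalars :: "nat \<Rightarrow> ('k::comm_ring_1 mpoly \<Rightarrow> 'k mpoly) set \<Rightarrow> bool" where
  "center_is_scalars n D \<longleftrightarrow>
     (\<forall>P\<in>D. (\<forall>R\<in>D. \<forall>p\<in>polys n. P (R p) = R (P p)) \<longleftrightarrow>
             (\<exists>c. \<forall>p\<in>polys n. P p = Const c * p))"

definition Q_wreath :: "nat \<Rightarrow> nat \<Rightarrow> 'k::comm_ring_1 mpoly" where
  "Q_wreath r n = (\<Prod>i<n. Var i) *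
                  (\<Prod>(i,j)\<in>{(i,j). i < j \<and> j < n}. Var j ^ r - Var i ^ r)"

definition Q_braid :: "nat \<Rightarrow> 'k::comm_ring_1 mpoly" where
  "Q_braid n = (\<Prod>(i,j)\<in>{(i,j). i < j \<and> j < n}. Var j - Var i)"

end

theory Submission
  imports Defs
begin

text \<open>An operator P in the center of D(A) commutes with every multiplication operator, so it is
multiplication by g = P 1. For each j the operator Q d/dx_j is a tangent derivation, and commuting
with it gives Q (dg/dx_j) = 0, hence dg/dx_j = 0 for all j, so g is a constant in characteristic
zero. Conversely multiplication by a constant commutes with every generator of D(A).\<close>

lemma keys_add_nat: "Poly_Mapping.keys ((a::'a \<Rightarrow>\<^sub>0 nat) + b) = Poly_Mapping.keys a \<union> Poly_Mapping.keys b"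
  by (auto simp: in_keys_iff lookup_add)

lemma diff_single_add_single:
  assumes "Poly_Mapping.lookup m i \<noteq> 0"
  shows "m - Poly_Mapping.single i 1 + Poly_Mapping.single i (1::nat) = m"
  by (rule poly_mapping_eqI) (use assms in \<open>auto simp: lookup_minus lookup_add lookup_single when_def\<close>)

lemma add_single_nonzero: "m + Poly_Mapping.single i (1::nat) \<noteq> 0"
  by (metis lookup_add lookup_single_eq lookup_zero add_is_0 one_neq_zero)

lemma lookup_Const_mult: "Poly_Mapping.lookup (Const c * p) m = c * Poly_Mapping.lookup p m"
  unfolding Const_def by (simp flip: mult_map_scale_conv_mult add: Poly_Mapping.map.rep_eq when_def)

lemma lookup_pdiff:
  "Poly_Mapping.lookup (pdiff i p) m =
     of_nat (Poly_Mapping.lookup m i + 1) * Poly_Mapping.lookup p (m + Poly_Mapping.single i 1)"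
proof -
  let ?s = "Poly_Mapping.single i (1::nat)"
  let ?c = "\<lambda>m'. of_nat (Poly_Mapping.lookup m' i) * Poly_Mapping.lookup p m'"
  have "Poly_Mapping.lookup (pdiff i p) m = (\<Sum>m'\<in>Poly_Mapping.keys p. if m' - ?s = m then ?c m' else 0)"
    unfolding pdiff_def lookup_sum by (intro sum.cong refl) (simp add: lookup_single when_def)
  also have "\<dots> = (\<Sum>m'\<in>Poly_Mapping.keys p. if m' = m + ?s then ?c m' else 0)"
  proof (intro sum.cong refl)
    fix m'
    have "m' - ?s = m \<longleftrightarrow> m' = m + ?s" if "Poly_Mapping.lookup m' i \<noteq> 0"
      using diff_single_add_single[OF that] by auto
    then show "(if m' - ?s = m then ?c m' else 0) = (if m' = m + ?s then ?c m' else 0)"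
      by (cases "Poly_Mapping.lookup m' i = 0") auto
  qed
  also have "\<dots> = ?c (m + ?s)"
    by (simp add: in_keys_iff)
  finally show ?thesis
    by (simp add: lookup_add)
qed

lemma pdiff_Const_mult: "pdiff i (Const c * p) = Const c * pdiff i p"
  by (rule poly_mapping_eqI) (simp only: lookup_pdiff lookup_Const_mult mult.left_commute)

lemma derivation_Const_mult: "derivation n a (Const c * p) = Const c * derivation n a p"
  unfolding derivation_def by (simp only: pdiff_Const_mult sum_distrib_left mult.left_commute)

lemma pdiff_1: "pdiff i 1 = 0"
  by (rule poly_mapping_eqI) (simp add: lookup_pdiff lookup_one when_def add_single_nonzero add_single_nonzero[simplified])

lemma derivation_1: "derivation n a 1 = 0"
  unfolding derivation_def by (simp add: pdiff_1)

lemma polys_iff: "p \<in> polys n \<longleftrightarrow> (\<forall>m. Poly_Mapping.lookup p m \<noteq> 0 \<longrightarrow> Poly_Mapping.keys m \<subseteq> {..<n})"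
  unfolding polys_def by (auto simp: in_keys_iff)

lemma polys_0 [simp]: "0 \<in> polys n"
  by (simp add: polys_def)

lemma polys_1 [simp]: "1 \<in> polys n"
  by (simp add: polys_def)

lemma polys_Var [simp]: "i < n \<Longrightarrow> Var i \<in> polys n"
  by (simp add: polys_def Var_def)

lemma polys_add [simp]: "p \<in> polys n \<Longrightarrow> q \<in> polys n \<Longrightarrow> p + q \<in> polys n"
  unfolding polys_iff by (metis add.right_neutral lookup_add)

lemma polys_diff [simp]: "p \<in> polys n \<Longrightarrow> q \<in> polys n \<Longrightarrow> p - q \<in> polys n"
  unfolding polys_iff by (metis diff_self lookup_minus)

lemma polys_mult [simp]: "p \<in> polys n \<Longrightarrow> q \<in> polys n \<Longrightarrow> p * q \<in> polys n"
  unfolding polys_def using keys_mult[of p q] by (force simp: keys_add_nat)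

lemma polys_sum: "(\<And>x. x \<in> A \<Longrightarrow> f x \<in> polys n) \<Longrightarrow> (\<Sum>x\<in>A. f x) \<in> polys n"
  by (induction A rule: infinite_finite_induct) auto

lemma polys_prod: "(\<And>x. x \<in> A \<Longrightarrow> f x \<in> polys n) \<Longrightarrow> (\<Prod>x\<in>A. f x) \<in> polys n"
  by (induction A rule: infinite_finite_induct) auto

lemma polys_power [simp]: "p \<in> polys n \<Longrightarrow> p ^ k \<in> polys n"
  by (induction k) auto

lemma polys_pdiff [simp]: "p \<in> polys n \<Longrightarrow> pdiff i p \<in> polys n"
  unfolding polys_iff lookup_pdiff by (metis keys_add_nat le_sup_iff mult_zero_right)

lemma polys_derivation: "p \<in> polys n \<Longrightarrow> (\<And>k. k < n \<Longrightarrow> a k \<in> polys n) \<Longrightarrow> derivation n a p \<in> polys n"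
  unfolding derivation_def by (intro polys_sum) auto

lemma Const_if_pdiff_eq_0:
  fixes g :: "'k::{idom, ring_char_0} mpoly"
  assumes g: "g \<in> polys n" and pdiff_g: "\<And>j. j < n \<Longrightarrow> pdiff j g = 0"
  shows "g = Const (Poly_Mapping.lookup g 0)"
proof -
  have "m = 0" if gm: "Poly_Mapping.lookup g m \<noteq> 0" for m
  proof (rule ccontr)
    assume "m \<noteq> 0"
    then obtain i where i: "Poly_Mapping.lookup m i \<noteq> 0"
      by (metis lookup_zero poly_mapping_eqI)
    then have "i \<in> Poly_Mapping.keys m" and "m \<in> Poly_Mapping.keys g"
      using gm by (simp_all add: in_keys_iff)
    with g have "i < n"
      unfolding polys_def by blast
    have "Poly_Mapping.lookup (pdiff i g) (m - Poly_Mapping.single i 1) =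
          of_nat (Poly_Mapping.lookup m i) * Poly_Mapping.lookup g m"
      unfolding lookup_pdiff diff_single_add_single[OF i] using i by (simp add: lookup_minus)
    with i gm pdiff_g[OF \<open>i < n\<close>] show False
      by simp
  qed
  then show ?thesis
    by (intro poly_mapping_eqI) (auto simp: Const_def lookup_single when_def)
qed

lemma gen_alg_polys:
  assumes "\<And>\<theta> p. \<theta> \<in> G \<Longrightarrow> p \<in> polys n \<Longrightarrow> \<theta> p \<in> polys n"
    and "R \<in> gen_alg n G" and "p \<in> polys n"
  shows "R p \<in> polys n"
  using assms(2,3) by (induction arbitrary: p rule: gen_alg.induct) (auto simp: assms(1))

lemma gen_alg_Const_mult:
  assumes "\<And>\<theta> p. \<theta> \<in> G \<Longrightarrow> \<theta> (Const c * p) = Const c * \<theta> p"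
    and "R \<in> gen_alg n G"
  shows "R (Const c * p) = Const c * R p"
  using assms(2) by (induction arbitrary: p rule: gen_alg.induct) (auto simp: assms(1) mult.left_commute distrib_left)

lemma tangent_derivations_polys:
  "\<theta> \<in> tangent_derivations n Q \<Longrightarrow> p \<in> polys n \<Longrightarrow> \<theta> p \<in> polys n"
  unfolding tangent_derivations_def by (auto intro: polys_derivation)

lemma tangent_derivations_Const_mult:
  "\<theta> \<in> tangent_derivations n Q \<Longrightarrow> \<theta> (Const c * p) = Const c * \<theta> p"
  unfolding tangent_derivations_def by (auto simp: derivation_Const_mult)

lemma Q_mult_pdiff_in_tangent_derivations:
  assumes "Q \<in> polys n" and "j < n"
  shows "(\<lambda>p. Q * pdiff j p) \<in> tangent_derivations n Q"
proof -
  define a where "a k = (if k = j then Q else 0)" for k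
  have "derivation n a p = (\<Sum>k<n. if k = j then Q * pdiff k p else 0)" for p
    unfolding derivation_def a_def by (intro sum.cong) simp_all
  with assms(2) have "derivation n a = (\<lambda>p. Q * pdiff j p)"
    by auto
  moreover have "a k \<in> polys n" for k
    using assms(1) by (simp add: a_def polys_def)
  ultimately show ?thesis
    unfolding tangent_derivations_def using assms(1)
    by (auto intro!: exI[of _ a] bexI[of _ "pdiff j Q"])
qed

lemma Dalg_polys: "P \<in> Dalg n Q \<Longrightarrow> p \<in> polys n \<Longrightarrow> P p \<in> polys n"
  using gen_alg_polys[of "tangent_derivations n Q" n P p] tangent_derivations_polys
  unfolding Dalg_def by blast

lemma Dalg_Const_mult: "P \<in> Dalg n Q \<Longrightarrow> P (Const c * p) = Const c * P p"
  using gen_alg_Const_mult[of "tangent_derivations n Q" c P n p] tangent_derivations_Const_mult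
  unfolding Dalg_def by blast

lemma center_is_scalars_Dalg:
  fixes Q :: "'k::{idom, ring_char_0} mpoly"
  assumes Q: "Q \<in> polys n" and "Q \<noteq> 0"
  shows "center_is_scalars n (Dalg n Q)"
  unfolding center_is_scalars_def
proof (rule ballI, rule iffI)
  fix P assume "P \<in> Dalg n Q" and central: "\<forall>R\<in>Dalg n Q. \<forall>p\<in>polys n. P (R p) = R (P p)"
  define g where "g = P 1"
  have "g \<in> polys n"
    using Dalg_polys[OF \<open>P \<in> Dalg n Q\<close>] by (simp add: g_def)
  have P_mult: "P p = p * g" if "p \<in> polys n" for p
  proof -
    have "(\<lambda>q. p * q) \<in> Dalg n Q"
      unfolding Dalg_def using that by (rule gen_alg.mult)
    with central have "P (p * 1) = p * P 1"
      using polys_1 by blast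
    then show ?thesis
      by (simp add: g_def)
  qed
  have "pdiff j g = 0" if "j < n" for j
  proof -
    have "(\<lambda>p. Q * pdiff j p) \<in> Dalg n Q"
      unfolding Dalg_def by (rule gen_alg.gen, rule Q_mult_pdiff_in_tangent_derivations[OF Q that])
    with central have "P (Q * pdiff j 1) = Q * pdiff j (P 1)"
      by force
    with \<open>Q \<noteq> 0\<close> show ?thesis
      by (simp add: pdiff_1 P_mult flip: g_def)
  qed
  with \<open>g \<in> polys n\<close> have "g = Const (Poly_Mapping.lookup g 0)"
    by (rule Const_if_pdiff_eq_0)
  with P_mult show "\<exists>c. \<forall>p\<in>polys n. P p = Const c * p"
    by (metis mult.commute)
next
  fix P :: "'k mpoly \<Rightarrow> 'k mpoly"
  assume "\<exists>c. \<forall>p\<in>polys n. P p = Const c * p"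
  then obtain c where c: "\<And>p. p \<in> polys n \<Longrightarrow> P p = Const c * p" by blast
  show "\<forall>R\<in>Dalg n Q. \<forall>p\<in>polys n. P (R p) = R (P p)"
    using c by (auto simp: Dalg_polys Dalg_Const_mult)
qed

lemma Var_power: "Var j ^ r = Poly_Mapping.single (Poly_Mapping.single j r) 1"
  by (induction r) (simp_all add: Var_def mult_single single_add[symmetric] add.commute)

lemma Var_nonzero: "Var i \<noteq> 0"
  by (metis Var_power lookup_single_eq lookup_zero one_neq_zero power_one_right)

lemma Var_power_eq_iff:
  assumes "r \<ge> 1"
  shows "(Var i :: 'k::comm_ring_1 mpoly) ^ r = Var j ^ r \<longleftrightarrow> i = j"
proof
  assume eq: "(Var i :: 'k mpoly) ^ r = Var j ^ r"
  have "Poly_Mapping.lookup (Var j ^ r :: 'k mpoly) (Poly_Mapping.single i r) =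
        Poly_Mapping.lookup (Var i ^ r) (Poly_Mapping.single i r)"
    by (simp only: eq)
  also have "\<dots> = 1"
    by (simp add: Var_power)
  finally have "Poly_Mapping.single i r = Poly_Mapping.single j r"
    by (metis Var_power lookup_single_not_eq zero_neq_one)
  with assms show "i = j"
    by (metis lookup_single_eq lookup_single_not_eq not_one_le_zero)
qed simp

lemma Var_eq_iff: "Var i = Var j \<longleftrightarrow> i = j"
  using Var_power_eq_iff[of 1] by simp

lemma finite_ordered_pairs: "finite {(i, j). i < j \<and> j < (n::nat)}"
  by (rule finite_subset[of _ "{..<n} \<times> {..<n}"]) auto

lemma Q_wreath_polys: "Q_wreath r n \<in> polys n"
  unfolding Q_wreath_def by (intro polys_mult polys_prod) auto

lemma Q_braid_polys: "Q_braid n \<in> polys n"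
  unfolding Q_braid_def by (intro polys_prod) auto

lemma Q_wreath_nonzero: "r \<ge> 1 \<Longrightarrow> (Q_wreath r n :: 'k::idom mpoly) \<noteq> 0"
  unfolding Q_wreath_def
  by (auto simp: prod_zero_iff Var_nonzero finite_ordered_pairs Var_power_eq_iff)

lemma Q_braid_nonzero: "(Q_braid n :: 'k::idom mpoly) \<noteq> 0"
  unfolding Q_braid_def
  by (auto simp: prod_zero_iff finite_ordered_pairs Var_eq_iff)

theorem corollary3p5:
  fixes r n :: nat
  assumes "r \<ge> 1" and "n \<ge> 1"
  shows "center_is_scalars n (Dalg n (Q_wreath r n :: 'k::field_char_0 mpoly))
       \<and> center_is_scalars n (Dalg n (Q_braid n :: 'k::field_char_0 mpoly))"
  using center_is_scalars_Dalg[OF Q_wreath_polys Q_wreath_nonzero[OF \<open>r \<ge> 1\<close>]]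
    center_is_scalars_Dalg[OF Q_braid_polys Q_braid_nonzero]
  by blast

end
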